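(* Let $\mathcal{G}_D$ be a bipartite planar graph with an isoradial embedding, let $(f_v(z))_v$ be a special discrete analytic function, and let $\mu$ be a measure on the plane such that the integrals $\int f_b(z)\,d\mu(z)$ are defined (absolutely convergent). Then $F(b)=\int f_b(z)\,d\mu(z)$, $b$ black, is a discrete analytic function, i.e. $\sum_{b\in B}\bar\partial(w,b)F(b)=0$ for every white vertex $w$.
   Context: An isoradial embedding of a planar graph is an embedding in which every face is inscribed in a circle of radius $1$ whose center lies in the closure of the face; the dual is embedded at the circumcenters. For each edge $e$ the rhombus $R(e)$ of side $1$ has as vertices the endpoints of $e$ and of its dual edge; rhombus edges join a vertex of $\mathcal{G}_D$ to a dual vertex. Vertices of $\mathcal{G}_D$ are black ($B$) or white. $\bar\partial$ is the symmetric matrix, zero on non-adjacent pairs, with $\bar\partial(w,b)=\bar\partial(b,w)=i(x-y)$ when $R(wb)$ has vertices $w,x,b,y$ in counterclockwise order (as complex numbers). A special discrete analytic function is a family of functions $f_v(z)$, indexed by the rhombus vertices $v$, such that for each rhombus edge from $v$ to $v'$ with $\mathcal{G}_D$-endpoint $u$, letting $e^{i\alpha}$ be the unit vector along the edge oriented away from $u$ if $u$ is white and towards $u$ if $u$ is black: $f_{v'}=f_v/(z-e^{i\alpha})$ if traversal from $v$ to $v'$ is in the direction of $e^{i\alpha}$, and $f_{v'}=f_v\cdot(z-e^{i\alpha})$ otherwise. *)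

theory Defs
  imports "HOL-Analysis.Analysis"
begin

text \<open>Straight-line embedded graphs in the plane.  Vertices of the graph G_D are
  identified with their positions in the complex plane (an embedding is injective);
  the edge relation E is symmetric.\<close>

definition drawing :: "complex set \<Rightarrow> (complex \<Rightarrow> complex \<Rightarrow> bool) \<Rightarrow> complex set" where
  "drawing V E = V \<union> \<Union>{closed_segment u v | u v. E u v}"

definition plane_graph :: "complex set \<Rightarrow> (complex \<Rightarrow> complex \<Rightarrow> bool) \<Rightarrow> bool" where
  "plane_graph V E \<longleftrightarrow>
     (\<forall>u v. E u v \<longrightarrow> u \<in> V \<and> v \<in> V \<and> u \<noteq> v \<and> E v u) \<and>
     (\<forall>u v u' v'. E u v \<longrightarrow> E u' v' \<longrightarrow> {u, v} \<noteq> {u', v'} \<longrightarrow>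
         closed_segment u v \<inter> closed_segment u' v' \<subseteq> {u, v} \<inter> {u', v'}) \<and>
     (\<forall>u v w. E u v \<longrightarrow> w \<in> V \<longrightarrow> w \<in> closed_segment u v \<longrightarrow> w = u \<or> w = v) \<and>
     (\<forall>K. compact K \<longrightarrow>
         finite (V \<inter> K) \<and> finite {(u, v). E u v \<and> closed_segment u v \<inter> K \<noteq> {}})"

definition faces :: "complex set \<Rightarrow> (complex \<Rightarrow> complex \<Rightarrow> bool) \<Rightarrow> complex set set" where
  "faces V E = components (- drawing V E)"

definition inscribed_center :: "complex set \<Rightarrow> complex set \<Rightarrow> complex \<Rightarrow> bool" where
  "inscribed_center V F c \<longleftrightarrow>
     c \<in> closure F \<and> F \<subseteq> cball c 1 \<and> (\<forall>v \<in> V \<inter> frontier F. cmod (v - c) = 1)"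

definition isoradial :: "complex set \<Rightarrow> (complex \<Rightarrow> complex \<Rightarrow> bool) \<Rightarrow> bool" where
  "isoradial V E \<longleftrightarrow> plane_graph V E \<and> (\<forall>F \<in> faces V E. \<exists>c. inscribed_center V F c)"

definition circumcenter :: "complex set \<Rightarrow> complex set \<Rightarrow> complex" where
  "circumcenter V F = (SOME c. inscribed_center V F c)"

definition right_face :: "complex set \<Rightarrow> (complex \<Rightarrow> complex \<Rightarrow> bool) \<Rightarrow> complex \<Rightarrow> complex \<Rightarrow> complex set" where
  "right_face V E u v = (THE F. F \<in> faces V E \<and>
      (\<forall>\<^sub>F t in at_right (0::real). (u + v) / 2 - of_real t * \<i> * (v - u) \<in> F))"

definition left_face :: "complex set \<Rightarrow> (complex \<Rightarrow> complex \<Rightarrow> bool) \<Rightarrow> complex \<Rightarrow> complex \<Rightarrow> complex set" where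
  "left_face V E u v = (THE F. F \<in> faces V E \<and>
      (\<forall>\<^sub>F t in at_right (0::real). (u + v) / 2 + of_real t * \<i> * (v - u) \<in> F))"

text \<open>Bipartite with black vertices B (white vertices: V - B).\<close>
definition bipartite_col :: "complex set \<Rightarrow> (complex \<Rightarrow> complex \<Rightarrow> bool) \<Rightarrow> complex set \<Rightarrow> bool" where
  "bipartite_col V E B \<longleftrightarrow> B \<subseteq> V \<and> (\<forall>u v. E u v \<longrightarrow> (u \<in> B \<longleftrightarrow> v \<notin> B))"

text \<open>For white w and black b adjacent, the rhombus R(wb) has vertices w, x, b, y in
  counterclockwise order, where x (resp. y) is the circumcenter of the face to the right
  (resp. left) of w \<rightarrow> b; then dbar(w,b) = i (x - y).  dbar is symmetric and zero on
  non-adjacent pairs.\<close>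
definition dbar_wb :: "complex set \<Rightarrow> (complex \<Rightarrow> complex \<Rightarrow> bool) \<Rightarrow> complex \<Rightarrow> complex \<Rightarrow> complex" where
  "dbar_wb V E w b = \<i> * (circumcenter V (right_face V E w b) - circumcenter V (left_face V E w b))"

definition dbar :: "complex set \<Rightarrow> (complex \<Rightarrow> complex \<Rightarrow> bool) \<Rightarrow> complex set \<Rightarrow> complex \<Rightarrow> complex \<Rightarrow> complex" where
  "dbar V E B u v =
     (if E u v then (if u \<in> B then dbar_wb V E v u else dbar_wb V E u v) else 0)"

text \<open>Rhombus vertices: Inl u for a vertex u of G_D, Inr F for the dual vertex of face F.\<close>
type_synonym rvert = "complex + complex set"

fun rpos :: "complex set \<Rightarrow> rvert \<Rightarrow> complex" where
  "rpos V (Inl u) = u"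
| "rpos V (Inr F) = circumcenter V F"

definition rhombus_edge :: "complex set \<Rightarrow> (complex \<Rightarrow> complex \<Rightarrow> bool) \<Rightarrow> complex \<Rightarrow> complex set \<Rightarrow> bool" where
  "rhombus_edge V E u F \<longleftrightarrow> (\<exists>v. E u v \<and> (F = right_face V E u v \<or> F = left_face V E u v))"

text \<open>The unit vector e^{i alpha} of the rhombus edge between u and F: oriented away
  from u if u is white, towards u if u is black.\<close>
definition rdir :: "complex set \<Rightarrow> complex set \<Rightarrow> complex \<Rightarrow> complex set \<Rightarrow> complex" where
  "rdir V B u F = (if u \<in> B then u - circumcenter V F else circumcenter V F - u)"

definition special_dafun ::
  "complex set \<Rightarrow> (complex \<Rightarrow> complex \<Rightarrow> bool) \<Rightarrow> complex set \<Rightarrow> (rvert \<Rightarrow> complex \<Rightarrow> complex) \<Rightarrow> bool" where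
  "special_dafun V E B f \<longleftrightarrow>
     (\<forall>u F. rhombus_edge V E u F \<longrightarrow>
        (\<forall>(v, v') \<in> {(Inl u, Inr F), (Inr F, Inl u)}. \<forall>z. z \<noteq> rdir V B u F \<longrightarrow>
           f v' z = (if rpos V v' - rpos V v = rdir V B u F
                     then f v z / (z - rdir V B u F)
                     else f v z * (z - rdir V B u F))))"

text \<open>Points where f_b (b black) is not defined by the defining relations.\<close>
definition sing_pts :: "complex set \<Rightarrow> (complex \<Rightarrow> complex \<Rightarrow> bool) \<Rightarrow> complex set \<Rightarrow> complex \<Rightarrow> complex set" where
  "sing_pts V E B b = {rdir V B b F | F. rhombus_edge V E b F}"

end

theory Submission
  imports Defs
begin

text \<open>Fix a white vertex w and write x_b, y_b for the dual vertices to the right and to the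
  left of the edge from w to a neighbour b. Both lie at distance 1 from w and b, so either
  x_b = y_b or x_b + y_b = w + b, i.e. R(wb) is a rhombus. Walking around it from w via x_b
  to b, the defining relations of f give f_b = f_w / ((z - (x_b - w)) (z - (y_b - w))),
  hence dbar(w, b) f_b(z) = i f_w(z) (h(x_b) - h(y_b)) with h(x) = 1 / (z - (x - w)).
  The face to the left of w b is the face to the right of the next edge counterclockwise
  around w, so y_b = x_b' for the successor b' of b, and the sum over b telescopes to 0
  at every z.\<close>

section \<open>Plane graphs\<close>

lemma plane_graph_edgeD:
  assumes "plane_graph V E" "E u v"
  shows "u \<in> V" "v \<in> V" "u \<noteq> v" "E v u"
  using assms(1)[unfolded plane_graph_def, THEN conjunct1, rule_format, OF assms(2)] by simp_all

lemma plane_graph_segments_meet: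
  assumes "plane_graph V E" "E u v" "E a b" "{u, v} \<noteq> {a, b}"
  shows "closed_segment u v \<inter> closed_segment a b \<subseteq> {u, v} \<inter> {a, b}"
  using assms(1)[unfolded plane_graph_def, THEN conjunct2, THEN conjunct1, rule_format, OF assms(2-4)] .

lemma plane_graph_vertex_on_edge:
  assumes "plane_graph V E" "E u v" "p \<in> V" "p \<in> closed_segment u v"
  shows "p = u \<or> p = v"
  using assms(1)[unfolded plane_graph_def, THEN conjunct2, THEN conjunct2, THEN conjunct1, rule_format,
      OF assms(2-4)] .

lemma plane_graph_locally_finite:
  assumes "plane_graph V E" "compact K"
  shows "finite (V \<inter> K)" "finite {(u, v). E u v \<and> closed_segment u v \<inter> K \<noteq> {}}"
  using assms(1)[unfolded plane_graph_def, THEN conjunct2, THEN conjunct2, THEN conjunct2, rule_format,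
      OF assms(2)] by simp_all

lemma finite_neighbours:
  assumes "plane_graph V E"
  shows "finite {v. E u v}"
proof -
  have "{v. E u v} \<subseteq> snd ` {(a, b). E a b \<and> closed_segment a b \<inter> {u} \<noteq> {}}"
    by (auto intro: image_eqI[where x = "(u, _)"])
  then show ?thesis
    using plane_graph_locally_finite(2)[OF assms, of "{u}"] by (auto intro: finite_subset)
qed

lemma mem_closed_segment_iff:
  fixes u v p :: complex
  shows "p \<in> closed_segment u v \<longleftrightarrow> (\<exists>s. 0 \<le> s \<and> s \<le> 1 \<and> p = u + of_real s * (v - u))"
  unfolding in_segment(1) by (simp add: scaleR_conv_of_real algebra_simps)

lemma drawing_iff: "p \<in> drawing V E \<longleftrightarrow> p \<in> V \<or> (\<exists>u v. E u v \<and> p \<in> closed_segment u v)"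
  unfolding drawing_def by blast

lemma drawing_near_compact:
  assumes pg: "plane_graph V E" and "compact J"
    and J_vertices: "J \<inter> (V - X) = {}"
    and J_edges: "\<And>a b. E a b \<Longrightarrow> \<not> A a b \<Longrightarrow> J \<inter> closed_segment a b = {}"
  obtains \<epsilon> where "\<epsilon> > 0"
    and "\<And>p q. p \<in> J \<Longrightarrow> dist p q < \<epsilon> \<Longrightarrow> q \<in> V \<Longrightarrow> q \<in> X"
    and "\<And>p q. p \<in> J \<Longrightarrow> dist p q < \<epsilon> \<Longrightarrow> q \<in> drawing V E \<Longrightarrow>
           q \<in> X \<or> (\<exists>a b. E a b \<and> A a b \<and> q \<in> closed_segment a b)"
proof -
  obtain R where R: "\<forall>p\<in>J. cmod p \<le> R"
    using compact_imp_bounded[OF \<open>compact J\<close>] bounded_pos by blast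
  define K :: "complex set" where "K = cball 0 (R + 1)"
  define ES where "ES = {(a, b). E a b \<and> closed_segment a b \<inter> K \<noteq> {} \<and> \<not> A a b}"
  define C where "C = (V \<inter> K - X) \<union> \<Union>((\<lambda>(a, b). closed_segment a b) ` ES)"
  have "finite (V \<inter> K)" "finite ES"
    using plane_graph_locally_finite[OF pg, of K] unfolding K_def ES_def
    by (auto elim: finite_subset[rotated])
  then have "closed C"
    unfolding C_def by (intro closed_Un finite_imp_closed closed_Union) auto
  moreover have "J \<inter> C = {}"
    using J_vertices J_edges unfolding C_def ES_def by blast
  ultimately obtain \<epsilon>0 where "\<epsilon>0 > 0" and \<epsilon>0: "\<forall>p\<in>J. \<forall>q\<in>C. \<epsilon>0 \<le> dist p q"
    using separate_compact_closed[OF \<open>compact J\<close>] by blast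
  have near: "q \<in> K \<and> q \<notin> C" if "p \<in> J" "dist p q < min 1 \<epsilon>0" for p q
  proof
    have "cmod q \<le> cmod p + dist p q"
      by (metis dist_commute dist_0_norm dist_triangle)
    then show "q \<in> K" using R that unfolding K_def by fastforce
    show "q \<notin> C" using \<epsilon>0 that by fastforce
  qed
  show thesis
  proof
    show "min 1 \<epsilon>0 > 0" using \<open>\<epsilon>0 > 0\<close> by simp
    show "q \<in> X" if "p \<in> J" "dist p q < min 1 \<epsilon>0" "q \<in> V" for p q
      using near[OF that(1,2)] that(3) unfolding C_def by blast
    show "q \<in> X \<or> (\<exists>a b. E a b \<and> A a b \<and> q \<in> closed_segment a b)"
      if "p \<in> J" "dist p q < min 1 \<epsilon>0" "q \<in> drawing V E" for p q
      using near[OF that(1,2)] that(3) unfolding C_def ES_def drawing_iff by blast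
  qed
qed

section \<open>Coordinates along an edge\<close>

definition edge_chart :: "complex \<Rightarrow> complex \<Rightarrow> real \<Rightarrow> real \<Rightarrow> complex" where
  "edge_chart u v s t = u + of_real s * (v - u) + of_real t * \<i> * (v - u)"

lemma edge_chart_endpoints: "edge_chart u v 0 0 = u" "edge_chart u v 1 0 = v"
  by (simp_all add: edge_chart_def)

lemma edge_chart_axis: "edge_chart u v (1/2) t = (u + v) / 2 + of_real t * \<i> * (v - u)"
  by (simp add: edge_chart_def field_simps)

lemma edge_chart_swap: "edge_chart v u (1 - s) t = edge_chart u v s (- t)"
  by (simp add: edge_chart_def algebra_simps)

lemma edge_chart_eq_iff:
  assumes "u \<noteq> v"
  shows "edge_chart u v s t = edge_chart u v s' t' \<longleftrightarrow> s = s' \<and> t = t'"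
proof -
  have diff: "edge_chart u v s t - edge_chart u v s' t' = Complex (s - s') (t - t') * (v - u)"
    by (simp add: edge_chart_def complex_eq_iff algebra_simps)
  have "edge_chart u v s t = edge_chart u v s' t' \<longleftrightarrow> edge_chart u v s t - edge_chart u v s' t' = 0"
    by (rule eq_iff_diff_eq_0)
  also have "\<dots> \<longleftrightarrow> Complex (s - s') (t - t') = 0"
    unfolding diff using assms by simp
  finally show ?thesis by (simp add: complex_eq_iff)
qed

lemma edge_chart_in_segment_iff:
  assumes "u \<noteq> v"
  shows "edge_chart u v s t \<in> closed_segment u v \<longleftrightarrow> t = 0 \<and> 0 \<le> s \<and> s \<le> 1"
proof -
  have "edge_chart u v s t \<in> closed_segment u v \<longleftrightarrow>
      (\<exists>s'. 0 \<le> s' \<and> s' \<le> 1 \<and> edge_chart u v s t = edge_chart u v s' 0)"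
    unfolding mem_closed_segment_iff by (simp add: edge_chart_def)
  also have "\<dots> \<longleftrightarrow> t = 0 \<and> 0 \<le> s \<and> s \<le> 1"
    using edge_chart_eq_iff[OF assms] by auto
  finally show ?thesis .
qed

lemma edge_chart_in_open_segment:
  assumes "u \<noteq> v" "0 < s" "s < 1"
  shows "edge_chart u v s 0 \<in> closed_segment u v - {u, v}"
proof -
  have "edge_chart u v s 0 \<noteq> edge_chart u v 0 0" "edge_chart u v s 0 \<noteq> edge_chart u v 1 0"
    using assms edge_chart_eq_iff[OF assms(1)] by auto
  then show ?thesis
    using assms edge_chart_in_segment_iff[OF assms(1)] unfolding edge_chart_endpoints by auto
qed

lemma dist_edge_chart:
  "dist (edge_chart u v s t) (edge_chart u v s' t') \<le> (\<bar>s - s'\<bar> + \<bar>t - t'\<bar>) * cmod (v - u)"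
proof -
  have "edge_chart u v s t - edge_chart u v s' t' = of_real (s - s') * (v - u) + \<i> * of_real (t - t') * (v - u)"
    by (simp add: edge_chart_def algebra_simps)
  then show ?thesis
    unfolding dist_norm by (metis norm_triangle_ineq distrib_right norm_mult norm_of_real norm_ii
        mult_1 abs_real_def)
qed

lemma edge_chart_off_drawing:
  assumes pg: "plane_graph V E" and uv: "E u v" and "0 < \<delta>"
  obtains \<epsilon> where "\<epsilon> > 0"
    and "\<And>s t. \<delta> \<le> s \<Longrightarrow> s \<le> 1 - \<delta> \<Longrightarrow> t \<noteq> 0 \<Longrightarrow> \<bar>t\<bar> < \<epsilon> \<Longrightarrow> edge_chart u v s t \<notin> drawing V E"
proof -
  have "u \<noteq> v" using plane_graph_edgeD[OF pg uv] by simp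
  define J where "J = (\<lambda>s. edge_chart u v s 0) ` {\<delta>..1 - \<delta>}"
  have "compact J"
    unfolding J_def edge_chart_def by (intro compact_continuous_image continuous_intros) auto
  have J_seg: "J \<subseteq> closed_segment u v - {u, v}"
    unfolding J_def using edge_chart_in_open_segment[OF \<open>u \<noteq> v\<close>] \<open>0 < \<delta>\<close> by auto
  obtain \<epsilon> where "\<epsilon> > 0"
    and near: "\<And>p q. p \<in> J \<Longrightarrow> dist p q < \<epsilon> \<Longrightarrow> q \<in> drawing V E \<Longrightarrow>
      q \<in> {} \<or> (\<exists>a b. E a b \<and> {a, b} = {u, v} \<and> q \<in> closed_segment a b)"
  proof (rule drawing_near_compact[OF pg \<open>compact J\<close>, where X = "{}" and A = "\<lambda>a b. {a, b} = {u, v}"])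
    show "J \<inter> (V - {}) = {}"
      using J_seg plane_graph_vertex_on_edge[OF pg uv] by blast
    show "J \<inter> closed_segment a b = {}" if "E a b" "{a, b} \<noteq> {u, v}" for a b
      using J_seg plane_graph_segments_meet[OF pg uv that(1)] that(2) by blast
  qed blast
  show thesis
  proof
    show "\<epsilon> / cmod (v - u) > 0" using \<open>\<epsilon> > 0\<close> \<open>u \<noteq> v\<close> by simp
    fix s t assume s: "\<delta> \<le> s" "s \<le> 1 - \<delta>" and t: "t \<noteq> 0" "\<bar>t\<bar> < \<epsilon> / cmod (v - u)"
    have "dist (edge_chart u v s 0) (edge_chart u v s t) < \<epsilon>"
      using dist_edge_chart[of u v s 0 s t] t \<open>u \<noteq> v\<close> by (simp add: field_simps)
    moreover have "edge_chart u v s 0 \<in> J" unfolding J_def using s by auto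
    moreover have "edge_chart u v s t \<notin> closed_segment u v"
      using edge_chart_in_segment_iff[OF \<open>u \<noteq> v\<close>] t by simp
    ultimately show "edge_chart u v s t \<notin> drawing V E"
      using near by (metis closed_segment_commute doubleton_eq_iff empty_iff)
  qed
qed

section \<open>Faces along an edge\<close>

lemma face_disjoint_drawing: "F \<in> faces V E \<Longrightarrow> F \<inter> drawing V E = {}"
  unfolding faces_def using in_components_subset by blast

lemma face_subsetI:
  assumes "F \<in> faces V E" "connected T" "T \<inter> drawing V E = {}" "T \<inter> F \<noteq> {}"
  shows "T \<subseteq> F"
  using components_maximal[of F "- drawing V E" T] assms unfolding faces_def by blast

lemma faces_eqI:
  assumes "F \<in> faces V E" "G \<in> faces V E" "x \<in> F" "x \<in> G"
  shows "F = G"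
  using components_eq[of F "- drawing V E" G] assms unfolding faces_def by blast

lemma faces_eq_if_connected:
  assumes "F \<in> faces V E" "G \<in> faces V E" "connected T" "T \<inter> drawing V E = {}"
    and "x \<in> T \<inter> F" "y \<in> T \<inter> G"
  shows "F = G"
proof -
  have "T \<subseteq> F" using face_subsetI[OF assms(1,3,4)] assms(5) by blast
  then show ?thesis using faces_eqI[OF assms(1,2)] assms(6) by blast
qed

lemma right_face_eq_left_face: "right_face V E u v = left_face V E v u"
proof -
  have "(u + v) / 2 - of_real t * \<i> * (v - u) = (v + u) / 2 + of_real t * \<i> * (u - v)" for t :: real
    by (simp add: algebra_simps)
  then show ?thesis unfolding right_face_def left_face_def by simp
qed

lemma left_face_eqI:
  assumes "F \<in> faces V E" "\<forall>\<^sub>F t in at_right 0. edge_chart u v (1/2) t \<in> F"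
  shows "left_face V E u v = F"
  unfolding left_face_def edge_chart_axis[symmetric]
proof (rule the_equality)
  fix G assume G: "G \<in> faces V E \<and> (\<forall>\<^sub>F t in at_right 0. edge_chart u v (1/2) t \<in> G)"
  then have "\<forall>\<^sub>F t in at_right 0. edge_chart u v (1/2) t \<in> G \<inter> F"
    using assms(2) by (auto intro: eventually_conj[THEN eventually_mono])
  then obtain t where "edge_chart u v (1/2) t \<in> G \<inter> F"
    using eventually_happens trivial_limit_at_right_real by blast
  then show "G = F" using faces_eqI[of G V E F] G assms(1) by blast
qed (use assms in blast)

definition edge_strip :: "complex \<Rightarrow> complex \<Rightarrow> real \<Rightarrow> real \<Rightarrow> complex set" where
  "edge_strip u v \<delta> \<epsilon> = (\<lambda>(s, t). edge_chart u v s t) ` ({\<delta>..1 - \<delta>} \<times> {0<..<\<epsilon>})"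

lemma edge_chart_in_edge_strip:
  "\<delta> \<le> s \<Longrightarrow> s \<le> 1 - \<delta> \<Longrightarrow> 0 < t \<Longrightarrow> t < \<epsilon> \<Longrightarrow> edge_chart u v s t \<in> edge_strip u v \<delta> \<epsilon>"
  unfolding edge_strip_def by force

lemma connected_edge_strip: "connected (edge_strip u v \<delta> \<epsilon>)"
  unfolding edge_strip_def edge_chart_def case_prod_unfold
  by (intro connected_continuous_image convex_connected convex_Times convex_real_interval
      continuous_intros)

lemma edge_strip_mono: "\<delta> \<le> \<delta>' \<Longrightarrow> \<epsilon>' \<le> \<epsilon> \<Longrightarrow> edge_strip u v \<delta>' \<epsilon>' \<subseteq> edge_strip u v \<delta> \<epsilon>"
  unfolding edge_strip_def by auto

lemma edge_strip_avoids_drawing: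
  assumes "plane_graph V E" "E u v" "0 < \<delta>"
  obtains \<epsilon> where "\<epsilon> > 0" "edge_strip u v \<delta> \<epsilon> \<inter> drawing V E = {}"
proof -
  obtain \<epsilon> where "\<epsilon> > 0" and off: "\<And>s t. \<delta> \<le> s \<Longrightarrow> s \<le> 1 - \<delta> \<Longrightarrow> t \<noteq> 0 \<Longrightarrow> \<bar>t\<bar> < \<epsilon> \<Longrightarrow>
      edge_chart u v s t \<notin> drawing V E"
    using edge_chart_off_drawing[OF assms] by blast
  have "edge_chart u v s t \<notin> drawing V E" if "(s, t) \<in> {\<delta>..1 - \<delta>} \<times> {0<..<\<epsilon>}" for s t
    using off that by auto
  then have "edge_strip u v \<delta> \<epsilon> \<inter> drawing V E = {}"
    unfolding edge_strip_def by auto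
  then show thesis using that \<open>\<epsilon> > 0\<close> by blast
qed

lemma left_face_contains_axis:
  assumes pg: "plane_graph V E" and uv: "E u v"
  obtains \<epsilon> where "\<epsilon> > 0" "left_face V E u v \<in> faces V E" "edge_strip u v (1/2) \<epsilon> \<subseteq> left_face V E u v"
proof -
  obtain \<epsilon> where "\<epsilon> > 0" and avoid: "edge_strip u v (1/2) \<epsilon> \<inter> drawing V E = {}"
    using edge_strip_avoids_drawing[OF pg uv, of "1/2"] by auto
  have "edge_chart u v (1/2) (\<epsilon>/2) \<in> edge_strip u v (1/2) \<epsilon>"
    using \<open>\<epsilon> > 0\<close> by (intro edge_chart_in_edge_strip) auto
  moreover have "edge_strip u v (1/2) \<epsilon> \<subseteq> - drawing V E" using avoid by blast
  ultimately obtain F where F: "F \<in> faces V E" "edge_strip u v (1/2) \<epsilon> \<subseteq> F"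
    using exists_component_superset[OF _ _ connected_edge_strip] unfolding faces_def by blast
  have "\<forall>\<^sub>F t in at_right 0. edge_chart u v (1/2) t \<in> F"
    using eventually_at_right_real[OF \<open>\<epsilon> > 0\<close>]
    by eventually_elim (use F(2) edge_chart_in_edge_strip in fastforce)
  then have "left_face V E u v = F" using left_face_eqI[OF F(1)] by blast
  then show thesis using that \<open>\<epsilon> > 0\<close> F by blast
qed

lemma left_face_in_faces: "plane_graph V E \<Longrightarrow> E u v \<Longrightarrow> left_face V E u v \<in> faces V E"
  using left_face_contains_axis by metis

lemma right_face_in_faces: "plane_graph V E \<Longrightarrow> E u v \<Longrightarrow> right_face V E u v \<in> faces V E"
  unfolding right_face_eq_left_face by (metis left_face_in_faces plane_graph_edgeD(4))

lemma edge_strip_subset_left_face: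
  assumes pg: "plane_graph V E" and uv: "E u v" and \<delta>: "0 < \<delta>" "\<delta> \<le> 1/2"
  obtains \<epsilon> where "\<epsilon> > 0" "edge_strip u v \<delta> \<epsilon> \<subseteq> left_face V E u v"
proof -
  obtain \<epsilon>0 where "\<epsilon>0 > 0" and LF: "left_face V E u v \<in> faces V E"
    and axis: "edge_strip u v (1/2) \<epsilon>0 \<subseteq> left_face V E u v"
    using left_face_contains_axis[OF pg uv] by blast
  obtain \<epsilon>1 where "\<epsilon>1 > 0" and avoid: "edge_strip u v \<delta> \<epsilon>1 \<inter> drawing V E = {}"
    using edge_strip_avoids_drawing[OF pg uv \<delta>(1)] by blast
  define \<epsilon> where "\<epsilon> = min \<epsilon>0 \<epsilon>1"
  have "\<epsilon> > 0" using \<open>\<epsilon>0 > 0\<close> \<open>\<epsilon>1 > 0\<close> unfolding \<epsilon>_def by simp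
  have "edge_chart u v (1/2) (\<epsilon>/2) \<in> edge_strip u v \<delta> \<epsilon>"
    using \<delta> \<open>\<epsilon> > 0\<close> by (intro edge_chart_in_edge_strip) auto
  moreover have "edge_chart u v (1/2) (\<epsilon>/2) \<in> left_face V E u v"
    using axis \<open>\<epsilon> > 0\<close> edge_chart_in_edge_strip[of "1/2" "1/2" "\<epsilon>/2" \<epsilon>0]
    unfolding \<epsilon>_def by auto
  moreover have "edge_strip u v \<delta> \<epsilon> \<inter> drawing V E = {}"
    using avoid edge_strip_mono[of \<delta> \<delta> \<epsilon> \<epsilon>1] unfolding \<epsilon>_def by auto
  ultimately have "edge_strip u v \<delta> \<epsilon> \<subseteq> left_face V E u v"
    using face_subsetI[OF LF connected_edge_strip] by blast
  then show thesis using that \<open>\<epsilon> > 0\<close> by blast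
qed

lemma edge_strip_subset_right_face:
  assumes pg: "plane_graph V E" and uv: "E u v" and \<delta>: "0 < \<delta>" "\<delta> \<le> 1/2"
  obtains \<epsilon> where "\<epsilon> > 0"
    "\<And>s t. \<delta> \<le> s \<Longrightarrow> s \<le> 1 - \<delta> \<Longrightarrow> 0 < t \<Longrightarrow> t < \<epsilon> \<Longrightarrow> edge_chart u v s (- t) \<in> right_face V E u v"
proof -
  obtain \<epsilon> where "\<epsilon> > 0" and strip: "edge_strip v u \<delta> \<epsilon> \<subseteq> left_face V E v u"
    using edge_strip_subset_left_face[OF pg plane_graph_edgeD(4)[OF pg uv] \<delta>] by blast
  have "edge_chart u v s (- t) \<in> right_face V E u v"
    if "\<delta> \<le> s" "s \<le> 1 - \<delta>" "0 < t" "t < \<epsilon>" for s t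
    using strip edge_chart_in_edge_strip[of \<delta> "1 - s" t \<epsilon> v u] that
    unfolding right_face_eq_left_face edge_chart_swap by auto
  then show thesis using that \<open>\<epsilon> > 0\<close> by blast
qed

lemma endpoints_in_closure_left_face:
  assumes pg: "plane_graph V E" and uv: "E u v" and "\<sigma> \<in> {0, 1}"
  shows "edge_chart u v \<sigma> 0 \<in> closure (left_face V E u v)"
  unfolding closure_approachable
proof (intro allI impI)
  fix r :: real assume "r > 0"
  define n where "n = cmod (v - u)"
  have "n > 0" using plane_graph_edgeD(3)[OF pg uv] unfolding n_def by simp
  define \<delta> where "\<delta> = min (1/4) (r / (3 * n))"
  have \<delta>: "0 < \<delta>" "\<delta> \<le> 1/4" "\<delta> \<le> r / (3 * n)"
    using \<open>r > 0\<close> \<open>n > 0\<close> unfolding \<delta>_def by auto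
  then have "3 * (\<delta> * n) \<le> r" using \<open>n > 0\<close> by (simp add: pos_le_divide_eq mult_ac)
  obtain \<epsilon> where "\<epsilon> > 0" and strip: "edge_strip u v \<delta> \<epsilon> \<subseteq> left_face V E u v"
    using edge_strip_subset_left_face[OF pg uv \<delta>(1)] \<delta>(2) by auto
  define t where "t = min (\<epsilon>/2) \<delta>"
  define s where "s = (if \<sigma> = 0 then \<delta> else 1 - \<delta>)"
  have "edge_chart u v s t \<in> edge_strip u v \<delta> \<epsilon>"
    using \<delta> \<open>\<epsilon> > 0\<close> unfolding s_def t_def by (intro edge_chart_in_edge_strip) auto
  then have "edge_chart u v s t \<in> left_face V E u v" using strip by blast
  moreover have "dist (edge_chart u v s t) (edge_chart u v \<sigma> 0) \<le> (\<delta> + t) * n"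
    using dist_edge_chart[of u v s t \<sigma> 0] assms(3) \<delta> \<open>\<epsilon> > 0\<close> by (auto simp: s_def t_def n_def)
  moreover have "(\<delta> + t) * n < r"
  proof -
    have "t * n \<le> \<delta> * n" "0 < \<delta> * n"
      using \<open>n > 0\<close> \<delta> unfolding t_def by auto
    then show ?thesis
      unfolding distrib_right using \<open>3 * (\<delta> * n) \<le> r\<close> by linarith
  qed
  ultimately show "\<exists>y\<in>left_face V E u v. dist y (edge_chart u v \<sigma> 0) < r"
    by (intro bexI[where x = "edge_chart u v s t"]) auto
qed

lemma endpoints_in_frontier_left_face:
  assumes pg: "plane_graph V E" and uv: "E u v"
  shows "u \<in> frontier (left_face V E u v)" "v \<in> frontier (left_face V E u v)"
proof -
  have "u \<in> closure (left_face V E u v)" "v \<in> closure (left_face V E u v)"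
    using endpoints_in_closure_left_face[OF pg uv, of 0] endpoints_in_closure_left_face[OF pg uv, of 1]
    unfolding edge_chart_endpoints by auto
  moreover have "u \<notin> left_face V E u v" "v \<notin> left_face V E u v"
    using face_disjoint_drawing[OF left_face_in_faces[OF pg uv]] plane_graph_edgeD[OF pg uv]
    unfolding drawing_def by auto
  ultimately show "u \<in> frontier (left_face V E u v)" "v \<in> frontier (left_face V E u v)"
    unfolding frontier_def using interior_subset by blast+
qed

section \<open>The rhombus of an edge\<close>

lemma isoradial_imp_plane_graph: "isoradial V E \<Longrightarrow> plane_graph V E"
  unfolding isoradial_def by (erule conjunct1)

lemma inscribed_center_circumcenter:
  assumes "isoradial V E" "F \<in> faces V E"
  shows "inscribed_center V F (circumcenter V F)"
proof -
  have "\<exists>c. inscribed_center V F c" using assms unfolding isoradial_def by blast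
  then show ?thesis unfolding circumcenter_def by (rule someI_ex)
qed

lemma dist_circumcenter_left_face:
  assumes iso: "isoradial V E" and uv: "E u v"
  shows "cmod (u - circumcenter V (left_face V E u v)) = 1"
    and "cmod (v - circumcenter V (left_face V E u v)) = 1"
proof -
  have pg: "plane_graph V E" using isoradial_imp_plane_graph[OF iso] .
  have "u \<in> V" "v \<in> V" using plane_graph_edgeD[OF pg uv] by simp_all
  with inscribed_center_circumcenter[OF iso left_face_in_faces[OF pg uv]]
    endpoints_in_frontier_left_face[OF pg uv]
  show "cmod (u - circumcenter V (left_face V E u v)) = 1"
    and "cmod (v - circumcenter V (left_face V E u v)) = 1"
    unfolding inscribed_center_def by blast+
qed

lemma two_unit_circles_intersection:
  fixes w b x y :: complex
  assumes "cmod (x - w) = 1" "cmod (x - b) = 1" "cmod (y - w) = 1" "cmod (y - b) = 1" "w \<noteq> b"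
  shows "x = y \<or> x + y = w + b"
proof -
  define p q d where "p = x - w" and "q = y - w" and "d = b - w"
  have unit: "(Re z)\<^sup>2 + (Im z)\<^sup>2 = 1" if "cmod z = 1" for z
    using that cmod_power2[of z] by simp
  have circ: "(Re p)\<^sup>2 + (Im p)\<^sup>2 = 1" "(Re q)\<^sup>2 + (Im q)\<^sup>2 = 1"
      "(Re p - Re d)\<^sup>2 + (Im p - Im d)\<^sup>2 = 1" "(Re q - Re d)\<^sup>2 + (Im q - Im d)\<^sup>2 = 1"
    using assms(1-4) unit[of p] unit[of q] unit[of "p - d"] unit[of "q - d"]
    unfolding p_def q_def d_def by (simp_all add: algebra_simps)
  have d: "(Re d)\<^sup>2 + (Im d)\<^sup>2 \<noteq> 0"
    using assms(5) unfolding d_def by (auto simp: complex_eq_iff sum_power2_eq_zero_iff)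
  text \<open>Both p and q solve 2 Re (z conj d) = |d|^2, so p - q is orthogonal to d and, as
    |p| = |q|, also to p + q; hence p + q is parallel to d, and that equation forces p + q = d.\<close>
  have orth: "(Re p - Re q) * Re d + (Im p - Im q) * Im d = 0" using circ by algebra
  have chord: "(Re p - Re q) * (Re p + Re q) + (Im p - Im q) * (Im p + Im q) = 0" using circ by algebra
  have mid: "(Re p + Re q) * Re d + (Im p + Im q) * Im d = (Re d)\<^sup>2 + (Im d)\<^sup>2" using circ by algebra
  show ?thesis
  proof (cases "p = q")
    case True then show ?thesis unfolding p_def q_def by simp
  next
    case False
    then have "Re p \<noteq> Re q \<or> Im p \<noteq> Im q" by (simp add: complex_eq_iff)
    moreover have "(Re p - Re q) * ((Re p + Re q) * Im d - (Im p + Im q) * Re d) = 0"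
      "(Im p - Im q) * ((Re p + Re q) * Im d - (Im p + Im q) * Re d) = 0"
      using orth chord by algebra+
    ultimately have "(Re p + Re q) * Im d - (Im p + Im q) * Re d = 0" by auto
    then have "((Re p + Re q - Re d)\<^sup>2 + (Im p + Im q - Im d)\<^sup>2) * ((Re d)\<^sup>2 + (Im d)\<^sup>2) = 0"
      using mid by algebra
    then have "(Re p + Re q - Re d)\<^sup>2 + (Im p + Im q - Im d)\<^sup>2 = 0" using d by (simp only: mult_eq_0_iff) simp
    then have "p + q = d" by (simp add: sum_power2_eq_zero_iff complex_eq_iff)
    then show ?thesis unfolding p_def q_def d_def by (simp add: algebra_simps)
  qed
qed

lemma rhombus_circumcenters:
  assumes iso: "isoradial V E" and wb: "E w b"
  defines "x \<equiv> circumcenter V (right_face V E w b)" and "y \<equiv> circumcenter V (left_face V E w b)"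
  shows "x = y \<or> x + y = w + b"
proof (rule two_unit_circles_intersection)
  have pg: "plane_graph V E" using isoradial_imp_plane_graph[OF iso] .
  have bw: "E b w" using plane_graph_edgeD[OF pg wb] by simp
  show "cmod (x - w) = 1" "cmod (x - b) = 1"
    using dist_circumcenter_left_face[OF iso bw]
    unfolding x_def right_face_eq_left_face by (simp_all add: norm_minus_commute)
  show "cmod (y - w) = 1" "cmod (y - b) = 1"
    using dist_circumcenter_left_face[OF iso wb] unfolding y_def by (simp_all add: norm_minus_commute)
  show "w \<noteq> b" using plane_graph_edgeD[OF pg wb] by simp
qed

lemma special_dafun_white:
  assumes "special_dafun V E B f" "rhombus_edge V E w F" "w \<notin> B" "z \<noteq> circumcenter V F - w"
  shows "f (Inr F) z = f (Inl w) z / (z - (circumcenter V F - w))"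
  using assms unfolding special_dafun_def rdir_def by auto

lemma special_dafun_black:
  assumes "special_dafun V E B f" "rhombus_edge V E b F" "b \<in> B" "z \<noteq> b - circumcenter V F"
  shows "f (Inl b) z = f (Inr F) z / (z - (b - circumcenter V F))"
  using assms unfolding special_dafun_def rdir_def by auto

lemma dbar_mul_black_eq_diff:
  assumes iso: "isoradial V E" and sp: "special_dafun V E B f"
    and "w \<notin> B" "b \<in> B" and wb: "E w b" and z: "z \<notin> sing_pts V E B b"
  defines "x \<equiv> circumcenter V (right_face V E w b)" and "y \<equiv> circumcenter V (left_face V E w b)"
  shows "dbar V E B w b * f (Inl b) z = \<i> * f (Inl w) z * (1 / (z - (x - w)) - 1 / (z - (y - w)))"
proof -
  have pg: "plane_graph V E" using isoradial_imp_plane_graph[OF iso] .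
  have bw: "E b w" using plane_graph_edgeD[OF pg wb] by simp
  have dbar: "dbar V E B w b = \<i> * (x - y)"
    using wb \<open>w \<notin> B\<close> unfolding dbar_def dbar_wb_def x_def y_def by simp
  show ?thesis
  proof (cases "x = y")
    case True then show ?thesis unfolding dbar by simp
  next
    case False
    then have "x + y = w + b" using rhombus_circumcenters[OF iso wb] unfolding x_def y_def by blast
    then have bx: "b - x = y - w" and "b - y = x - w" by (simp_all add: algebra_simps)
    let ?X = "right_face V E w b"
    have edges: "rhombus_edge V E w ?X" "rhombus_edge V E b ?X" "rhombus_edge V E b (left_face V E w b)"
      using wb bw unfolding rhombus_edge_def right_face_eq_left_face by blast+
    moreover have "z \<noteq> b - x" "z \<noteq> b - y"
      using z edges(2,3) \<open>b \<in> B\<close> unfolding sing_pts_def rdir_def x_def y_def by auto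
    ultimately have "f (Inl b) z = f (Inl w) z / (z - (x - w)) / (z - (y - w))"
      using special_dafun_white[OF sp, of w ?X z] special_dafun_black[OF sp, of b ?X z]
        \<open>w \<notin> B\<close> \<open>b \<in> B\<close> bx \<open>b - y = x - w\<close> unfolding x_def by simp
    moreover have "z - (x - w) \<noteq> 0" "z - (y - w) \<noteq> 0"
      using \<open>z \<noteq> b - x\<close> \<open>z \<noteq> b - y\<close> bx \<open>b - y = x - w\<close> by auto
    ultimately show ?thesis unfolding dbar by (simp add: field_simps)
  qed
qed

section \<open>Counterclockwise order of the edges at a vertex\<close>

text \<open>Normalising to (0, 2 pi] rather than (-pi, pi] makes the direction of an edge the
  last one met when turning counterclockwise from it.\<close>

definition ccw_arg :: "complex \<Rightarrow> real" where
  "ccw_arg z = (if 0 < Arg z then Arg z else Arg z + 2 * pi)"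

lemma ccw_arg_bounds: "0 < ccw_arg z" "ccw_arg z \<le> 2 * pi"
  using Arg_bounded[of z] pi_gt_zero unfolding ccw_arg_def by auto

lemma cis_ccw_arg: "z \<noteq> 0 \<Longrightarrow> cis (ccw_arg z) = sgn z"
  unfolding ccw_arg_def by (simp add: cis_Arg cis_mult[symmetric, of _ "2 * pi"])

lemma cis_ccw_arg_unit:
  assumes "cmod z = 1"
  shows "cis (ccw_arg z) = z"
proof -
  have "z \<noteq> 0" using assms by auto
  then show ?thesis using cis_ccw_arg[of z] assms by (simp add: sgn_div_norm)
qed

lemma ccw_arg_cis:
  assumes "0 < \<phi>" "\<phi> \<le> 2 * pi"
  shows "ccw_arg (cis \<phi>) = \<phi>"
proof (cases "\<phi> \<le> pi")
  case True
  then have "Arg (cis \<phi>) = \<phi>" using assms by (intro cis_Arg_unique) auto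
  then show ?thesis using assms unfolding ccw_arg_def by simp
next
  case False
  have "cis (\<phi> - 2 * pi) = cis \<phi>" by (simp add: cis_divide[symmetric])
  then have "Arg (cis \<phi>) = \<phi> - 2 * pi" using False assms by (intro cis_Arg_unique) auto
  then show ?thesis using assms unfolding ccw_arg_def by simp
qed

lemma ccw_arg_1: "ccw_arg 1 = 2 * pi"
  by (simp add: ccw_arg_def)

lemma ccw_arg_less:
  assumes "cmod z = 1" "z \<noteq> 1"
  shows "ccw_arg z < 2 * pi"
proof -
  have "ccw_arg z \<noteq> 2 * pi"
  proof
    assume "ccw_arg z = 2 * pi"
    then have "z = cis (2 * pi)" using cis_ccw_arg_unit[OF assms(1)] by simp
    then show False using assms(2) by simp
  qed
  then show ?thesis using ccw_arg_bounds(2) by (simp add: order_less_le)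
qed

lemma ccw_arg_mult:
  assumes "cmod p = 1" "cmod q = 1"
  shows "ccw_arg (p * q) = ccw_arg p + ccw_arg q \<or> ccw_arg (p * q) = ccw_arg p + ccw_arg q - 2 * pi"
proof -
  define \<phi> where "\<phi> = ccw_arg p + ccw_arg q"
  have "p * q = cis \<phi>"
    using assms cis_ccw_arg_unit[of p] cis_ccw_arg_unit[of q] unfolding \<phi>_def
    by (simp add: cis_mult[symmetric])
  moreover have "cis (\<phi> - 2 * pi) = cis \<phi>" by (simp add: cis_divide[symmetric])
  moreover have "0 < \<phi>" "\<phi> \<le> 4 * pi" using ccw_arg_bounds[of p] ccw_arg_bounds[of q] unfolding \<phi>_def by auto
  ultimately show ?thesis
    using ccw_arg_cis[of \<phi>] ccw_arg_cis[of "\<phi> - 2 * pi"] unfolding \<phi>_def by force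
qed

definition ccw_angle :: "complex \<Rightarrow> complex \<Rightarrow> complex \<Rightarrow> real" where
  "ccw_angle w b c = ccw_arg (sgn (c - w) / sgn (b - w))"

lemma ccw_angle_bounds: "0 < ccw_angle w b c" "ccw_angle w b c \<le> 2 * pi"
  unfolding ccw_angle_def by (rule ccw_arg_bounds)+

lemma cis_ccw_angle:
  assumes "b \<noteq> w" "c \<noteq> w"
  shows "cis (ccw_angle w b c) * sgn (b - w) = sgn (c - w)"
proof -
  let ?q = "sgn (c - w) / sgn (b - w)"
  have "cmod ?q = 1" using assms by (simp add: norm_divide norm_sgn)
  then have "cis (ccw_angle w b c) = ?q"
    unfolding ccw_angle_def by (rule cis_ccw_arg_unit)
  then show ?thesis using assms by (simp add: sgn_zero_iff)
qed

lemma polar_rotate_ccw_angle: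
  assumes "b \<noteq> w" "c \<noteq> w"
  shows "w + of_real \<rho> * sgn (b - w) * cis (ccw_angle w b c - \<eta>) = w + of_real \<rho> * sgn (c - w) * cis (- \<eta>)"
proof -
  have "w + of_real \<rho> * sgn (b - w) * cis (ccw_angle w b c - \<eta>) =
      w + of_real \<rho> * (cis (ccw_angle w b c) * sgn (b - w)) * cis (- \<eta>)"
    by (simp add: cis_mult mult_ac)
  then show ?thesis unfolding cis_ccw_angle[OF assms] .
qed

lemma ccw_angle_eqI:
  assumes "b \<noteq> w" "0 < \<phi>" "\<phi> \<le> 2 * pi" "sgn (c - w) = cis \<phi> * sgn (b - w)"
  shows "ccw_angle w b c = \<phi>"
proof -
  have "sgn (b - w) \<noteq> 0" using assms(1) by (simp add: sgn_zero_iff)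
  then show ?thesis using assms(2-4) ccw_arg_cis[of \<phi>] unfolding ccw_angle_def by simp
qed

lemma ccw_angle_self: "b \<noteq> w \<Longrightarrow> ccw_angle w b b = 2 * pi"
  unfolding ccw_angle_def by (simp add: ccw_arg_1 sgn_zero_iff)

lemma ccw_angle_less:
  assumes "b \<noteq> w" "c \<noteq> w" "sgn (b - w) \<noteq> sgn (c - w)"
  shows "ccw_angle w b c < 2 * pi"
  using assms unfolding ccw_angle_def by (intro ccw_arg_less) (auto simp: norm_divide norm_sgn)

lemma ccw_angle_add:
  assumes "b \<noteq> w" "b' \<noteq> w" "c \<noteq> w"
  shows "ccw_angle w b c = ccw_angle w b b' + ccw_angle w b' c \<or>
         ccw_angle w b c = ccw_angle w b b' + ccw_angle w b' c - 2 * pi"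
proof -
  have "sgn (c - w) / sgn (b - w) = sgn (b' - w) / sgn (b - w) * (sgn (c - w) / sgn (b' - w))"
    using assms by (simp add: sgn_zero_iff)
  then show ?thesis
    using ccw_arg_mult[of "sgn (b' - w) / sgn (b - w)" "sgn (c - w) / sgn (b' - w)"] assms
    unfolding ccw_angle_def by (simp add: norm_divide norm_sgn)
qed

lemma sgn_eq_imp_in_closed_segment:
  fixes w b c :: complex
  assumes "cmod (b - w) \<le> cmod (c - w)" "sgn (b - w) = sgn (c - w)"
  shows "b \<in> closed_segment w c"
proof (cases "b = w")
  case True then show ?thesis by simp
next
  case False
  define s where "s = cmod (b - w) / cmod (c - w)"
  have "b - w = of_real (cmod (b - w)) * sgn (c - w)"
    unfolding assms(2)[symmetric] using False by (simp add: sgn_eq)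
  also have "\<dots> = of_real s * (c - w)"
    unfolding s_def sgn_eq by simp
  finally have "b = w + of_real s * (c - w)" by (simp add: algebra_simps)
  moreover have "0 \<le> s" "s \<le> 1"
    using assms(1) False unfolding s_def by (auto simp: divide_le_eq_1)
  ultimately show ?thesis unfolding mem_closed_segment_iff by blast
qed

lemma plane_graph_neighbour_directions_inj:
  assumes pg: "plane_graph V E" and "E w b" "E w c" "b \<noteq> c"
  shows "sgn (b - w) \<noteq> sgn (c - w)"
proof
  assume same: "sgn (b - w) = sgn (c - w)"
  have "b \<in> V" "c \<in> V" "b \<noteq> w" "c \<noteq> w"
    using plane_graph_edgeD[OF pg \<open>E w b\<close>] plane_graph_edgeD[OF pg \<open>E w c\<close>] by auto
  consider "cmod (b - w) \<le> cmod (c - w)" | "cmod (c - w) \<le> cmod (b - w)" by linarith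
  then show False
  proof cases
    case 1
    then have "b \<in> closed_segment w c" using same by (rule sgn_eq_imp_in_closed_segment)
    then show False
      using plane_graph_vertex_on_edge[OF pg \<open>E w c\<close> \<open>b \<in> V\<close>] \<open>b \<noteq> w\<close> \<open>b \<noteq> c\<close> by blast
  next
    case 2
    then have "c \<in> closed_segment w b" using same[symmetric] by (rule sgn_eq_imp_in_closed_segment)
    then show False
      using plane_graph_vertex_on_edge[OF pg \<open>E w b\<close> \<open>c \<in> V\<close>] \<open>c \<noteq> w\<close> \<open>b \<noteq> c\<close> by blast
  qed
qed

definition ccw_next :: "(complex \<Rightarrow> complex \<Rightarrow> bool) \<Rightarrow> complex \<Rightarrow> complex \<Rightarrow> complex" where
  "ccw_next E w b = arg_min_on (ccw_angle w b) {c. E w c}"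

lemma ccw_next:
  assumes "plane_graph V E" "E w b"
  shows "E w (ccw_next E w b)" "\<And>c. E w c \<Longrightarrow> ccw_angle w b (ccw_next E w b) \<le> ccw_angle w b c"
proof -
  have fin: "finite {c. E w c}" and ne: "{c. E w c} \<noteq> {}"
    using finite_neighbours[OF assms(1)] assms(2) by auto
  show "E w (ccw_next E w b)"
    unfolding ccw_next_def using arg_min_if_finite(1)[OF fin ne] by simp
  show "ccw_angle w b (ccw_next E w b) \<le> ccw_angle w b c" if "E w c" for c
    unfolding ccw_next_def using arg_min_least[OF fin ne] that by simp
qed

lemma ccw_angle_swap:
  assumes pg: "plane_graph V E" and "E w b" "E w c" "b \<noteq> c"
  shows "ccw_angle w b c + ccw_angle w c b = 2 * pi"
proof -
  have "b \<noteq> w" "c \<noteq> w"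
    using plane_graph_edgeD[OF pg \<open>E w b\<close>] plane_graph_edgeD[OF pg \<open>E w c\<close>] by auto
  moreover have "sgn (b - w) \<noteq> sgn (c - w)"
    using plane_graph_neighbour_directions_inj[OF assms] .
  ultimately have "ccw_angle w b c < 2 * pi" "ccw_angle w c b < 2 * pi"
    and "ccw_angle w b b = ccw_angle w b c + ccw_angle w c b \<or>
      ccw_angle w b b = ccw_angle w b c + ccw_angle w c b - 2 * pi"
    and "ccw_angle w b b = 2 * pi"
    using ccw_angle_less ccw_angle_add ccw_angle_self by metis+
  then show ?thesis by linarith
qed

lemma inj_on_ccw_next:
  assumes pg: "plane_graph V E"
  shows "inj_on (ccw_next E w) {b. E w b}"
proof (rule inj_onI, rule ccontr)
  fix b b' assume "b \<in> {b. E w b}" "b' \<in> {b. E w b}" "b \<noteq> b'"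
    and next_eq: "ccw_next E w b = ccw_next E w b'"
  then have "E w b" "E w b'" by auto
  define c where "c = ccw_next E w b"
  have "E w c" using ccw_next(1)[OF pg \<open>E w b\<close>] unfolding c_def .
  then have "b \<noteq> w" "b' \<noteq> w" "c \<noteq> w"
    using plane_graph_edgeD(3)[OF pg] \<open>E w b\<close> \<open>E w b'\<close> by metis+
  text \<open>Turning from b to c passes b', unless it overshoots b by the full turn.\<close>
  then have "ccw_angle w b c = ccw_angle w b b' + ccw_angle w b' c \<or>
      ccw_angle w b c = ccw_angle w b b' + ccw_angle w b' c - 2 * pi"
    by (rule ccw_angle_add)
  moreover have "ccw_angle w b c \<le> ccw_angle w b b'"
    using ccw_next(2)[OF pg \<open>E w b\<close> \<open>E w b'\<close>] unfolding c_def .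
  moreover have "ccw_angle w b' c \<le> ccw_angle w b' b"
    using ccw_next(2)[OF pg \<open>E w b'\<close> \<open>E w b\<close>] unfolding c_def next_eq .
  ultimately show False
    using ccw_angle_swap[OF pg \<open>E w b\<close> \<open>E w b'\<close> \<open>b \<noteq> b'\<close>] ccw_angle_bounds(1)[of w b c]
      ccw_angle_bounds(1)[of w b' c] by linarith
qed

lemma bij_betw_ccw_next:
  assumes "plane_graph V E"
  shows "bij_betw (ccw_next E w) {b. E w b} {b. E w b}"
proof -
  have "ccw_next E w ` {b. E w b} \<subseteq> {b. E w b}" using ccw_next(1)[OF assms] by blast
  then show ?thesis
    using endo_inj_surj[OF finite_neighbours[OF assms]] inj_on_ccw_next[OF assms]
    unfolding bij_betw_def by blast
qed

section \<open>Consecutive edges share a face\<close>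

lemma vertex_neighbourhood:
  assumes pg: "plane_graph V E" and "w \<in> V"
  obtains r where "r > 0" "\<And>b. E w b \<Longrightarrow> r \<le> cmod (b - w)"
    "\<And>p. cmod (p - w) < r \<Longrightarrow> p \<in> drawing V E \<Longrightarrow> p = w \<or> (\<exists>b. E w b \<and> p \<in> closed_segment w b)"
proof -
  obtain r where "r > 0"
    and vert: "\<And>p q. p \<in> {w} \<Longrightarrow> dist p q < r \<Longrightarrow> q \<in> V \<Longrightarrow> q \<in> {w}"
    and draw: "\<And>p q. p \<in> {w} \<Longrightarrow> dist p q < r \<Longrightarrow> q \<in> drawing V E \<Longrightarrow>
      q \<in> {w} \<or> (\<exists>a b. E a b \<and> (a = w \<or> b = w) \<and> q \<in> closed_segment a b)"
  proof (rule drawing_near_compact[OF pg, of "{w}" "{w}" "\<lambda>a b. a = w \<or> b = w"])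
    show "compact {w}" "{w} \<inter> (V - {w}) = {}" by simp_all
    show "{w} \<inter> closed_segment a b = {}" if "E a b" "\<not> (a = w \<or> b = w)" for a b
      using plane_graph_vertex_on_edge[OF pg that(1) \<open>w \<in> V\<close>] that(2) by blast
  qed blast
  show thesis
  proof
    show "r > 0" by fact
    show "r \<le> cmod (b - w)" if "E w b" for b
    proof (rule ccontr)
      assume "\<not> r \<le> cmod (b - w)"
      then have "b = w"
        using vert[of w b] plane_graph_edgeD(2)[OF pg that] by (simp add: dist_norm norm_minus_commute)
      then show False using plane_graph_edgeD(3)[OF pg that] by simp
    qed
    show "p = w \<or> (\<exists>b. E w b \<and> p \<in> closed_segment w b)"
      if "cmod (p - w) < r" "p \<in> drawing V E" for p
    proof -
      have "p = w \<or> (\<exists>a b. E a b \<and> (a = w \<or> b = w) \<and> p \<in> closed_segment a b)"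
        using draw[of w p] that by (simp add: dist_norm norm_minus_commute)
      then show ?thesis
        using plane_graph_edgeD(4)[OF pg] closed_segment_commute by metis
    qed
  qed
qed

lemma polar_eq_edge_chart:
  assumes "b \<noteq> w"
  shows "w + of_real \<rho> * sgn (b - w) * cis \<phi> =
    edge_chart w b (\<rho> * cos \<phi> / cmod (b - w)) (\<rho> * sin \<phi> / cmod (b - w))"
  using assms by (simp add: edge_chart_def sgn_eq cis.code Complex_eq field_simps)

lemma polar_chart_bounds:
  fixes \<rho> n \<eta> :: real
  assumes "0 < \<rho>" "2 * \<rho> \<le> n" "0 < \<eta>" "\<eta> \<le> pi / 3"
  shows "\<rho> / 2 / n \<le> \<rho> * cos \<eta> / n" "\<rho> * cos \<eta> / n \<le> 1 - \<rho> / 2 / n"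
    and "0 < \<rho> * sin \<eta> / n" "\<rho> * sin \<eta> / n \<le> \<eta> / 2"
proof -
  have "n > 0" using assms(1,2) by linarith
  have "1/2 \<le> cos \<eta>"
    using cos_monotone_0_pi_le[of \<eta> "pi / 3"] assms(3,4) by (simp add: cos_60)
  then have lo: "\<rho> / 2 \<le> \<rho> * cos \<eta>" and hi: "\<rho> * cos \<eta> \<le> \<rho>"
    using assms(1) mult_left_mono[of "1/2" "cos \<eta>" \<rho>] mult_left_mono[OF cos_le_one, of \<rho> \<eta>] by auto
  show "\<rho> / 2 / n \<le> \<rho> * cos \<eta> / n"
    using divide_right_mono[OF lo, of n] \<open>n > 0\<close> by simp
  have "\<rho> * cos \<eta> / n \<le> \<rho> / n" using divide_right_mono[OF hi, of n] \<open>n > 0\<close> by simp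
  also have "\<dots> \<le> 1 - \<rho> / 2 / n" using assms(2) \<open>n > 0\<close> by (simp add: field_simps)
  finally show "\<rho> * cos \<eta> / n \<le> 1 - \<rho> / 2 / n" .
  have "0 < sin \<eta>" using assms(3,4) pi_gt_zero by (intro sin_gt_zero) auto
  then show "0 < \<rho> * sin \<eta> / n" using assms(1) \<open>n > 0\<close> by simp
  have "\<rho> / n \<le> 1/2" using assms(2) \<open>n > 0\<close> by (simp add: field_simps)
  then have "\<rho> / n * sin \<eta> \<le> 1/2 * \<eta>"
    using sin_x_le_x[of \<eta>] assms(3) \<open>0 < sin \<eta>\<close> by (intro mult_mono) auto
  then show "\<rho> * sin \<eta> / n \<le> \<eta> / 2" by simp
qed

lemma polar_points_near_edge:
  assumes pg: "plane_graph V E" and wb: "E w b" and "0 < \<rho>" "2 * \<rho> \<le> cmod (b - w)"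
  obtains \<eta>0 where "\<eta>0 > 0"
    "\<And>\<eta>. 0 < \<eta> \<Longrightarrow> \<eta> < \<eta>0 \<Longrightarrow> w + of_real \<rho> * sgn (b - w) * cis \<eta> \<in> left_face V E w b"
    "\<And>\<eta>. 0 < \<eta> \<Longrightarrow> \<eta> < \<eta>0 \<Longrightarrow> w + of_real \<rho> * sgn (b - w) * cis (- \<eta>) \<in> right_face V E w b"
proof -
  define n where "n = cmod (b - w)"
  define \<delta> where "\<delta> = \<rho> / 2 / n"
  have "0 < n" using assms(3,4) unfolding n_def by linarith
  then have "0 < \<delta>" "\<delta> \<le> 1/2"
    using assms(3,4) unfolding \<delta>_def n_def by (auto simp: field_simps)
  obtain \<epsilon>L where "\<epsilon>L > 0" and left: "edge_strip w b \<delta> \<epsilon>L \<subseteq> left_face V E w b"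
    using edge_strip_subset_left_face[OF pg wb \<open>0 < \<delta>\<close> \<open>\<delta> \<le> 1/2\<close>] by blast
  obtain \<epsilon>R where "\<epsilon>R > 0" and right: "\<And>s t. \<delta> \<le> s \<Longrightarrow> s \<le> 1 - \<delta> \<Longrightarrow> 0 < t \<Longrightarrow> t < \<epsilon>R \<Longrightarrow>
      edge_chart w b s (- t) \<in> right_face V E w b"
    using edge_strip_subset_right_face[OF pg wb \<open>0 < \<delta>\<close> \<open>\<delta> \<le> 1/2\<close>] by blast
  define \<eta>0 where "\<eta>0 = min (pi / 3) (min \<epsilon>L \<epsilon>R)"
  have "w + of_real \<rho> * sgn (b - w) * cis \<eta> \<in> left_face V E w b \<and>
      w + of_real \<rho> * sgn (b - w) * cis (- \<eta>) \<in> right_face V E w b" if "0 < \<eta>" "\<eta> < \<eta>0" for \<eta>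
  proof -
    define s t where "s = \<rho> * cos \<eta> / n" and "t = \<rho> * sin \<eta> / n"
    have "\<delta> \<le> s" "s \<le> 1 - \<delta>" "0 < t" "t \<le> \<eta> / 2"
      using polar_chart_bounds[of \<rho> n \<eta>] assms(3,4) that unfolding s_def t_def \<delta>_def n_def \<eta>0_def
      by auto
    moreover have "\<eta> / 2 < \<epsilon>L" "\<eta> / 2 < \<epsilon>R" using that unfolding \<eta>0_def by auto
    moreover have "w + of_real \<rho> * sgn (b - w) * cis \<eta> = edge_chart w b s t"
      "w + of_real \<rho> * sgn (b - w) * cis (- \<eta>) = edge_chart w b s (- t)"
      using polar_eq_edge_chart[of b w \<rho>] plane_graph_edgeD(3)[OF pg wb]
      unfolding s_def t_def n_def by auto
    ultimately show ?thesis
      using left edge_chart_in_edge_strip right by auto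
  qed
  moreover have "\<eta>0 > 0" using \<open>\<epsilon>L > 0\<close> \<open>\<epsilon>R > 0\<close> unfolding \<eta>0_def by simp
  ultimately show thesis using that by blast
qed

lemma circle_arc_avoids_drawing:
  assumes pg: "plane_graph V E" and wb: "E w b"
    and near_w: "\<And>p. cmod (p - w) < r \<Longrightarrow> p \<in> drawing V E \<Longrightarrow> p = w \<or> (\<exists>c. E w c \<and> p \<in> closed_segment w c)"
    and "0 < \<rho>" "\<rho> < r" "0 < \<alpha>" and before: "\<And>c. E w c \<Longrightarrow> \<beta> < ccw_angle w b c"
  shows "(\<lambda>\<phi>. w + of_real \<rho> * sgn (b - w) * cis \<phi>) ` {\<alpha>..\<beta>} \<inter> drawing V E = {}"
proof -
  have "b \<noteq> w" using plane_graph_edgeD(3)[OF pg wb] by simp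
  have "w + of_real \<rho> * sgn (b - w) * cis \<phi> \<notin> drawing V E" if "\<alpha> \<le> \<phi>" "\<phi> \<le> \<beta>" for \<phi>
  proof
    define p where "p = w + of_real \<rho> * sgn (b - w) * cis \<phi>"
    assume "p \<in> drawing V E"
    have "cmod (p - w) = \<rho>" using \<open>b \<noteq> w\<close> \<open>0 < \<rho>\<close> unfolding p_def by (simp add: norm_mult norm_sgn)
    then have "p \<noteq> w" using \<open>0 < \<rho>\<close> by auto
    then obtain c where "E w c" and "p \<in> closed_segment w c"
      using near_w \<open>p \<in> drawing V E\<close> \<open>cmod (p - w) = \<rho>\<close> \<open>\<rho> < r\<close> by blast
    then obtain s where "0 \<le> s" and s: "p - w = of_real s * (c - w)"
      unfolding mem_closed_segment_iff by auto
    with \<open>p \<noteq> w\<close> have "0 < s" by (cases "s = 0") auto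
    then have "sgn (p - w) = sgn (c - w)"
      unfolding s by (simp add: sgn_mult sgn_of_real)
    moreover have "sgn (p - w) = cis \<phi> * sgn (b - w)"
      using \<open>cmod (p - w) = \<rho>\<close> \<open>0 < \<rho>\<close> unfolding sgn_eq[of "p - w"] by (simp add: p_def)
    moreover have "0 < \<phi>" "\<phi> < 2 * pi"
      using that \<open>0 < \<alpha>\<close> before[OF wb] ccw_angle_self[OF \<open>b \<noteq> w\<close>] by auto
    ultimately have "ccw_angle w b c = \<phi>" using ccw_angle_eqI \<open>b \<noteq> w\<close> by simp
    then show False using before[OF \<open>E w c\<close>] that(2) by simp
  qed
  then show ?thesis by auto
qed

lemma left_face_eq_right_face_ccw_next:
  assumes pg: "plane_graph V E" and wb: "E w b"
  shows "left_face V E w b = right_face V E w (ccw_next E w b)"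
proof -
  define c where "c = ccw_next E w b"
  define A where "A = ccw_angle w b c"
  have "E w c" using ccw_next(1)[OF pg wb] unfolding c_def .
  have "b \<noteq> w" "c \<noteq> w" "w \<in> V"
    using plane_graph_edgeD[OF pg wb] plane_graph_edgeD[OF pg \<open>E w c\<close>] by auto
  obtain r where "r > 0" and r_le: "\<And>b. E w b \<Longrightarrow> r \<le> cmod (b - w)"
    and near_w: "\<And>p. cmod (p - w) < r \<Longrightarrow> p \<in> drawing V E \<Longrightarrow> p = w \<or> (\<exists>b. E w b \<and> p \<in> closed_segment w b)"
    using vertex_neighbourhood[OF pg \<open>w \<in> V\<close>] by metis
  define \<rho> where "\<rho> = r / 2"
  have "0 < \<rho>" "\<rho> < r" "2 * \<rho> \<le> cmod (b - w)" "2 * \<rho> \<le> cmod (c - w)"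
    using \<open>r > 0\<close> r_le[OF wb] r_le[OF \<open>E w c\<close>] unfolding \<rho>_def by auto
  obtain \<eta>b where "\<eta>b > 0" and left_b: "\<And>\<eta>. 0 < \<eta> \<Longrightarrow> \<eta> < \<eta>b \<Longrightarrow>
      w + of_real \<rho> * sgn (b - w) * cis \<eta> \<in> left_face V E w b"
    using polar_points_near_edge[OF pg wb \<open>0 < \<rho>\<close> \<open>2 * \<rho> \<le> cmod (b - w)\<close>] by metis
  obtain \<eta>c where "\<eta>c > 0" and right_c: "\<And>\<eta>. 0 < \<eta> \<Longrightarrow> \<eta> < \<eta>c \<Longrightarrow>
      w + of_real \<rho> * sgn (c - w) * cis (- \<eta>) \<in> right_face V E w c"
    using polar_points_near_edge[OF pg \<open>E w c\<close> \<open>0 < \<rho>\<close> \<open>2 * \<rho> \<le> cmod (c - w)\<close>] by metis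
  define \<eta> where "\<eta> = min (min \<eta>b \<eta>c) A / 2"
  have \<eta>: "0 < \<eta>" "\<eta> < \<eta>b" "\<eta> < \<eta>c" "\<eta> \<le> A - \<eta>"
    using \<open>\<eta>b > 0\<close> \<open>\<eta>c > 0\<close> ccw_angle_bounds(1)[of w b c] unfolding \<eta>_def A_def by auto
  define \<gamma> where "\<gamma> \<phi> = w + of_real \<rho> * sgn (b - w) * cis \<phi>" for \<phi>
  have "connected (\<gamma> ` {\<eta>..A - \<eta>})"
    unfolding \<gamma>_def by (intro connected_continuous_image continuous_intros) auto
  moreover have "\<gamma> ` {\<eta>..A - \<eta>} \<inter> drawing V E = {}"
  proof -
    have "A - \<eta> < ccw_angle w b c'" if "E w c'" for c'
      using ccw_next(2)[OF pg wb that] \<open>0 < \<eta>\<close> unfolding A_def c_def by linarith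
    then show ?thesis
      unfolding \<gamma>_def using circle_arc_avoids_drawing[OF pg wb near_w \<open>0 < \<rho>\<close> \<open>\<rho> < r\<close> \<open>0 < \<eta>\<close>, of "A - \<eta>"]
      by simp
  qed
  moreover have "\<gamma> \<eta> \<in> \<gamma> ` {\<eta>..A - \<eta>} \<inter> left_face V E w b"
    using left_b \<eta> unfolding \<gamma>_def by auto
  moreover have "\<gamma> (A - \<eta>) \<in> right_face V E w c"
    unfolding \<gamma>_def A_def polar_rotate_ccw_angle[OF \<open>b \<noteq> w\<close> \<open>c \<noteq> w\<close>] using right_c \<eta> by simp
  then have "\<gamma> (A - \<eta>) \<in> \<gamma> ` {\<eta>..A - \<eta>} \<inter> right_face V E w c" using \<eta> by auto
  ultimately show ?thesis
    using faces_eq_if_connected[OF left_face_in_faces[OF pg wb] right_face_in_faces[OF pg \<open>E w c\<close>]]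
    unfolding c_def by blast
qed

section \<open>Telescoping around a white vertex\<close>

lemma dbar_sum_black_eq_0:
  assumes iso: "isoradial V E" and bip: "bipartite_col V E B" and sp: "special_dafun V E B f"
    and w: "w \<in> V - B" and z: "\<And>b. b \<in> B \<Longrightarrow> E w b \<Longrightarrow> z \<notin> sing_pts V E B b"
  shows "(\<Sum>b\<in>{b \<in> B. E w b}. dbar V E B w b * f (Inl b) z) = 0"
proof -
  have pg: "plane_graph V E" using isoradial_imp_plane_graph[OF iso] .
  have N: "{b \<in> B. E w b} = {b. E w b}" using bip w unfolding bipartite_col_def by blast
  define h where "h F = 1 / (z - (circumcenter V F - w))" for F
  have "(\<Sum>b\<in>{b. E w b}. h (left_face V E w b)) = (\<Sum>b\<in>{b. E w b}. h (right_face V E w (ccw_next E w b)))"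
    using left_face_eq_right_face_ccw_next[OF pg] by simp
  also have "\<dots> = (\<Sum>b\<in>{b. E w b}. h (right_face V E w b))"
    using sum.reindex_bij_betw[OF bij_betw_ccw_next[OF pg]] .
  finally have telescope: "(\<Sum>b\<in>{b. E w b}. h (right_face V E w b) - h (left_face V E w b)) = 0"
    by (simp add: sum_subtractf)
  have "dbar V E B w b * f (Inl b) z = \<i> * f (Inl w) z * (h (right_face V E w b) - h (left_face V E w b))"
    if "E w b" for b
  proof -
    have "b \<in> B" using that N by blast
    moreover have "w \<notin> B" using w by blast
    ultimately show ?thesis
      using dbar_mul_black_eq_diff[OF iso sp _ _ that z] that unfolding h_def by blast
  qed
  then have "(\<Sum>b\<in>{b \<in> B. E w b}. dbar V E B w b * f (Inl b) z) =
      (\<Sum>b\<in>{b. E w b}. \<i> * f (Inl w) z * (h (right_face V E w b) - h (left_face V E w b)))"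
    unfolding N by (intro sum.cong) auto
  also have "\<dots> = 0"
    by (simp add: telescope flip: sum_distrib_left)
  finally show ?thesis .
qed

lemma sum_integral_eq_0_AE:
  fixes f :: "'i \<Rightarrow> 'a \<Rightarrow> 'b::{real_normed_field, banach, second_countable_topology}"
  assumes "finite I" "\<And>i. i \<in> I \<Longrightarrow> integrable M (f i)"
    and "AE x in M. (\<Sum>i\<in>I. c i * f i x) = 0"
  shows "(\<Sum>i\<in>I. c i * integral\<^sup>L M (f i)) = 0"
proof -
  have int: "integrable M (\<lambda>x. c i * f i x)" if "i \<in> I" for i
    using assms(2)[OF that] by simp
  have "(\<Sum>i\<in>I. c i * integral\<^sup>L M (f i)) = (\<Sum>i\<in>I. \<integral>x. c i * f i x \<partial>M)"
    by simp
  also have "\<dots> = (\<integral>x. (\<Sum>i\<in>I. c i * f i x) \<partial>M)"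
    using Bochner_Integration.integral_sum[where I = I and M = M and f = "\<lambda>i x. c i * f i x"] int by simp
  also have "\<dots> = (\<integral>x. 0 \<partial>M)"
  proof (rule integral_cong_AE)
    show "(\<lambda>x. \<Sum>i\<in>I. c i * f i x) \<in> borel_measurable M"
      by (intro borel_measurable_integrable Bochner_Integration.integrable_sum) (rule int)
  qed (use assms(3) in simp_all)
  finally show ?thesis by simp
qed

theorem theorem9p1:
  fixes V B :: "complex set" and E :: "complex \<Rightarrow> complex \<Rightarrow> bool"
    and f :: "rvert \<Rightarrow> complex \<Rightarrow> complex" and \<mu> :: "complex measure"
  assumes "isoradial V E"
    and "bipartite_col V E B"
    and "special_dafun V E B f"
    and "sets \<mu> = sets borel"
    and "\<forall>b \<in> B. integrable \<mu> (f (Inl b)) \<and> (AE z in \<mu>. z \<notin> sing_pts V E B b)"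
  shows "\<forall>w \<in> V - B.
           (\<Sum>b \<in> {b \<in> B. E w b}. dbar V E B w b * (\<integral>z. f (Inl b) z \<partial>\<mu>)) = 0"
proof
  fix w assume w: "w \<in> V - B"
  have fin: "finite {b \<in> B. E w b}"
    using finite_neighbours[OF isoradial_imp_plane_graph[OF assms(1)], of w] by simp
  then have "AE z in \<mu>. \<forall>b \<in> {b \<in> B. E w b}. z \<notin> sing_pts V E B b"
    using assms(5) by (intro AE_finite_allI) auto
  then have "AE z in \<mu>. (\<Sum>b\<in>{b \<in> B. E w b}. dbar V E B w b * f (Inl b) z) = 0"
    by eventually_elim (rule dbar_sum_black_eq_0[OF assms(1-3) w], auto)
  then show "(\<Sum>b \<in> {b \<in> B. E w b}. dbar V E B w b * (\<integral>z. f (Inl b) z \<partial>\<mu>)) = 0"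
    using assms(5) by (intro sum_integral_eq_0_AE[OF fin]) auto
qed

end
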